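(* Let $\mathcal P$ be a projective plane of finite order $n$. Then $\mathcal P$ contains a Fano configuration (seven points and seven lines, each line containing exactly three of the points and each point on exactly three of the lines, i.e. a subplane of order $2$) if and only if $\mathcal P$ can be coordinatised (in the sense described in the context, with some labelling set $\mathcal R$ of cardinality $n$) in such a way that the resulting additive loop $(\mathcal R,\oplus)$ contains an involution, i.e. an element $t\neq 0$ with $t\oplus t=0$.
   Context: Coordinatisation of a projective plane $\mathcal P$ of order $n$: let $\mathcal R$ be a set of cardinality $n$ with two distinguished elements $0\neq 1$, and $\infty\notin\mathcal R$ a symbol. Choose a quadrangle $O,X,Y,I$ (four points, no three collinear). Label $O=(0,0)$, $X=(0)$, $Y=(\infty)$, $I=(1,1)$; set $[\infty]=\overline{XY}$, $[0]=\overline{OY}$, $[0,0]=\overline{OX}$. Set $(0,1)=\overline{XI}\cap[0]$, $(1,0)=\overline{YI}\cap[0,0]$, $J=(1)=\overline{(1,0)(0,1)}\cap[\infty]$. Label the remaining $n-2$ points of $[0]$ other than $O,Y,(0,1)$ as $(0,a)$, $a\in\mathcal R\setminus\{0,1\}$, arbitrarily. Then set $(a,0)=\overline{(0,a)J}\cap[0,0]$, $(a)=\overline{(0,a)(1,0)}\cap[\infty]$, $(a,b)=\overline{(a,0)Y}\cap\overline{(0,b)X}$, and label lines $[a]=\overline{(a,0)Y}$ and $[m,k]=\overline{(m)(0,k)}$. The planar ternary ring (PTR) is $T:\mathcal R^3\to\mathcal R$ with $T(m,x,y)=k$ iff $(x,y)\in[m,k]$. The additive loop is $x\oplus y=T(1,x,y)$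 (a loop on $\mathcal R$ with identity $0$) and the multiplicative loop is $x\odot y=T(x,y,0)$. *)

theory Defs
  imports Main
begin

definition collinear :: "('p \<Rightarrow> 'l \<Rightarrow> bool) \<Rightarrow> 'p \<Rightarrow> 'p \<Rightarrow> 'p \<Rightarrow> bool" where
  "collinear inc a b c \<longleftrightarrow> (\<exists>l. inc a l \<and> inc b l \<and> inc c l)"

definition quadrangle :: "('p \<Rightarrow> 'l \<Rightarrow> bool) \<Rightarrow> 'p \<Rightarrow> 'p \<Rightarrow> 'p \<Rightarrow> 'p \<Rightarrow> bool" where
  "quadrangle inc a b c d \<longleftrightarrow>
     a \<noteq> b \<and> a \<noteq> c \<and> a \<noteq> d \<and> b \<noteq> c \<and> b \<noteq> d \<and> c \<noteq> d \<and>
     \<not> collinear inc a b c \<and> \<not> collinear inc a b d \<and>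
     \<not> collinear inc a c d \<and> \<not> collinear inc b c d"

definition projective_plane :: "('p \<Rightarrow> 'l \<Rightarrow> bool) \<Rightarrow> bool" where
  "projective_plane inc \<longleftrightarrow>
     (\<forall>p q. p \<noteq> q \<longrightarrow> (\<exists>!l. inc p l \<and> inc q l)) \<and>
     (\<forall>l m. l \<noteq> m \<longrightarrow> (\<exists>!p. inc p l \<and> inc p m)) \<and>
     (\<exists>a b c d. quadrangle inc a b c d)"

definition projective_plane_of_order :: "('p \<Rightarrow> 'l \<Rightarrow> bool) \<Rightarrow> nat \<Rightarrow> bool" where
  "projective_plane_of_order inc n \<longleftrightarrow>
     projective_plane inc \<and> finite (UNIV :: 'p set) \<and> (\<forall>l. card {p. inc p l} = n + 1)"

definition has_fano :: "('p \<Rightarrow> 'l \<Rightarrow> bool) \<Rightarrow> bool" where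
  "has_fano inc \<longleftrightarrow> (\<exists>S T. card S = 7 \<and> card T = 7 \<and>
      (\<forall>l\<in>T. card {p\<in>S. inc p l} = 3) \<and> (\<forall>p\<in>S. card {l\<in>T. inc p l} = 3))"

definition join :: "('p \<Rightarrow> 'l \<Rightarrow> bool) \<Rightarrow> 'p \<Rightarrow> 'p \<Rightarrow> 'l" where
  "join inc p q = (THE l. inc p l \<and> inc q l)"

definition meet :: "('p \<Rightarrow> 'l \<Rightarrow> bool) \<Rightarrow> 'l \<Rightarrow> 'l \<Rightarrow> 'p" where
  "meet inc l m = (THE p. inc p l \<and> inc p m)"

text \<open>Coordinatisation data: labelling set R with distinguished elements zero, one;
  quadrangle Or, X, Y, E (E is the unit point I = (1,1)); lam a is the point (0,a) of [0] = OY.\<close>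
definition coordinatisation ::
  "('p \<Rightarrow> 'l \<Rightarrow> bool) \<Rightarrow> 'r set \<Rightarrow> 'r \<Rightarrow> 'r \<Rightarrow> 'p \<Rightarrow> 'p \<Rightarrow> 'p \<Rightarrow> 'p \<Rightarrow> ('r \<Rightarrow> 'p) \<Rightarrow> bool" where
  "coordinatisation inc R zero one Or X Y E lam \<longleftrightarrow>
     quadrangle inc Or X Y E \<and> zero \<in> R \<and> one \<in> R \<and> zero \<noteq> one \<and>
     bij_betw lam R ({p. inc p (join inc Or Y)} - {Y}) \<and>
     lam zero = Or \<and> lam one = meet inc (join inc X E) (join inc Or Y)"

definition pt10 :: "('p \<Rightarrow> 'l \<Rightarrow> bool) \<Rightarrow> 'p \<Rightarrow> 'p \<Rightarrow> 'p \<Rightarrow> 'p \<Rightarrow> 'p" where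
  "pt10 inc Or X Y E = meet inc (join inc Y E) (join inc Or X)"

definition ptJ :: "('p \<Rightarrow> 'l \<Rightarrow> bool) \<Rightarrow> 'r \<Rightarrow> 'p \<Rightarrow> 'p \<Rightarrow> 'p \<Rightarrow> 'p \<Rightarrow> ('r \<Rightarrow> 'p) \<Rightarrow> 'p" where
  "ptJ inc one Or X Y E lam =
     meet inc (join inc (pt10 inc Or X Y E) (lam one)) (join inc X Y)"

definition ptA0 :: "('p \<Rightarrow> 'l \<Rightarrow> bool) \<Rightarrow> 'r \<Rightarrow> 'p \<Rightarrow> 'p \<Rightarrow> 'p \<Rightarrow> 'p \<Rightarrow> ('r \<Rightarrow> 'p) \<Rightarrow> 'r \<Rightarrow> 'p" where
  "ptA0 inc one Or X Y E lam a =
     meet inc (join inc (lam a) (ptJ inc one Or X Y E lam)) (join inc Or X)"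

definition ptAB :: "('p \<Rightarrow> 'l \<Rightarrow> bool) \<Rightarrow> 'r \<Rightarrow> 'p \<Rightarrow> 'p \<Rightarrow> 'p \<Rightarrow> 'p \<Rightarrow> ('r \<Rightarrow> 'p) \<Rightarrow> 'r \<Rightarrow> 'r \<Rightarrow> 'p" where
  "ptAB inc one Or X Y E lam a b =
     meet inc (join inc (ptA0 inc one Or X Y E lam a) Y) (join inc (lam b) X)"

definition ptM :: "('p \<Rightarrow> 'l \<Rightarrow> bool) \<Rightarrow> 'p \<Rightarrow> 'p \<Rightarrow> 'p \<Rightarrow> 'p \<Rightarrow> ('r \<Rightarrow> 'p) \<Rightarrow> 'r \<Rightarrow> 'p" where
  "ptM inc Or X Y E lam m =
     meet inc (join inc (lam m) (pt10 inc Or X Y E)) (join inc X Y)"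

definition lineMK :: "('p \<Rightarrow> 'l \<Rightarrow> bool) \<Rightarrow> 'p \<Rightarrow> 'p \<Rightarrow> 'p \<Rightarrow> 'p \<Rightarrow> ('r \<Rightarrow> 'p) \<Rightarrow> 'r \<Rightarrow> 'r \<Rightarrow> 'l" where
  "lineMK inc Or X Y E lam m k = join inc (ptM inc Or X Y E lam m) (lam k)"

definition PTR :: "('p \<Rightarrow> 'l \<Rightarrow> bool) \<Rightarrow> 'r set \<Rightarrow> 'r \<Rightarrow> 'p \<Rightarrow> 'p \<Rightarrow> 'p \<Rightarrow> 'p \<Rightarrow> ('r \<Rightarrow> 'p)
    \<Rightarrow> 'r \<Rightarrow> 'r \<Rightarrow> 'r \<Rightarrow> 'r" where
  "PTR inc R one Or X Y E lam m x y =
     (THE k. k \<in> R \<and> inc (ptAB inc one Or X Y E lam x y) (lineMK inc Or X Y E lam m k))"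

definition coord_add :: "('p \<Rightarrow> 'l \<Rightarrow> bool) \<Rightarrow> 'r set \<Rightarrow> 'r \<Rightarrow> 'p \<Rightarrow> 'p \<Rightarrow> 'p \<Rightarrow> 'p \<Rightarrow> ('r \<Rightarrow> 'p)
    \<Rightarrow> 'r \<Rightarrow> 'r \<Rightarrow> 'r" where
  "coord_add inc R one Or X Y E lam x y = PTR inc R one Or X Y E lam one x y"

end

theory Submission
  imports Defs
begin

text \<open>A Fano configuration is the same thing as a quadrangle whose three diagonal points are
  collinear. In a projective plane a Fano configuration is closed under joins and meets (by
  counting), so the four of its points off one of its lines form a quadrangle whose diagonal
  points lie on that line; conversely such a quadrangle together with its diagonal points and
  their line is a Fano configuration.

  Taking such a quadrangle a, b, c, d as the frame O, X, Y, E puts the diagonal points at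
  (1,0), (0,1) and J = (1), and then (1,1) = E lies on the line through J and O, which is
  [1,0]; that is, 1 \<oplus> 1 = 0. Conversely, if t \<oplus> t = 0 then (t,t) lies on OJ, and
  O, X, Y, (t,t) is a quadrangle with diagonal points (t,0), (0,t) and J, which are collinear
  by the very construction of (t,0).\<close>

lemma Collect_conj_insert:
  "{x \<in> insert a A. P x} = (if P a then insert a {x \<in> A. P x} else {x \<in> A. P x})"
  by auto

lemma bij_betw_fixing_two_labels:
  assumes "finite B" "card B = n" "y0 \<in> B" "y1 \<in> B" "y0 \<noteq> y1"
  obtains lam where "bij_betw lam {0..<n} B" "lam 0 = y0" "lam 1 = y1"
proof -
  have "card {y0, y1} \<le> n"
    using assms card_mono[of B "{y0, y1}"] by simp
  then have n2: "2 \<le> n" using assms(5) by simp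
  have "card (B - {y0, y1}) = card {2..<n}"
    using assms by (simp add: card_Diff_subset)
  then obtain g where g: "bij_betw g {2..<n} (B - {y0, y1})"
    using finite_same_card_bij assms(1) by (metis finite_Diff finite_atLeastLessThan)
  define lam where "lam = g(0 := y0, 1 := y1)"
  have "bij_betw lam {0, 1} {y0, y1}"
    using assms(5) unfolding lam_def bij_betw_def by auto
  moreover have "bij_betw lam {2..<n} (B - {y0, y1})"
    using g by (rule bij_betw_cong[THEN iffD1, rotated]) (auto simp: lam_def)
  ultimately have "bij_betw lam ({0, 1} \<union> {2..<n}) ({y0, y1} \<union> (B - {y0, y1}))"
    by (rule bij_betw_combine) auto
  moreover have "{0, 1} \<union> {2..<n} = {0..<n}" using n2 by auto
  moreover have "{y0, y1} \<union> (B - {y0, y1}) = B" using assms by auto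
  ultimately show thesis using that by (simp add: lam_def)
qed

text \<open>The lines of T through p carry pairwise disjoint pairs of further points of S, three
  pairs in all, so they exhaust the six points of S - {p}.\<close>

lemma fano_configuration_pair_on_line:
  assumes unique: "\<And>p q l m. \<lbrakk>p \<noteq> q; inc p l; inc q l; inc p m; inc q m\<rbrakk> \<Longrightarrow> l = m"
    and "card S = 7" "finite T"
    and line_points: "\<And>l. l \<in> T \<Longrightarrow> card {p \<in> S. inc p l} = 3"
    and point_lines: "\<And>p. p \<in> S \<Longrightarrow> card {l \<in> T. inc p l} = 3"
    and "p \<in> S" "q \<in> S" "p \<noteq> q"
  shows "\<exists>l\<in>T. inc p l \<and> inc q l"
proof -
  have "finite S" using \<open>card S = 7\<close> by (intro card_ge_0_finite) simp
  define Lp where "Lp = {l \<in> T. inc p l}"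
  define others where "others l = {x \<in> S. inc x l} - {p}" for l
  have "card (others l) = 2" if "l \<in> Lp" for l
    using that line_points \<open>p \<in> S\<close> \<open>finite S\<close> unfolding others_def Lp_def
    by (simp add: card_Diff_singleton)
  moreover have "finite Lp" unfolding Lp_def using \<open>finite T\<close> by simp
  moreover have "others i \<inter> others j = {}" if "i \<in> Lp" "j \<in> Lp" "i \<noteq> j" for i j
    using that unique unfolding others_def Lp_def by blast
  ultimately have "card (\<Union>(others ` Lp)) = (\<Sum>l\<in>Lp. 2)"
    using \<open>finite S\<close> by (subst card_UN_disjoint) (auto simp: others_def)
  also have "\<dots> = card (S - {p})"
    using point_lines \<open>p \<in> S\<close> \<open>card S = 7\<close> \<open>finite S\<close> unfolding Lp_def by simp
  finally have "\<Union>(others ` Lp) = S - {p}"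
    using \<open>finite S\<close> by (intro card_subset_eq) (auto simp: others_def)
  then show ?thesis
    using \<open>q \<in> S\<close> \<open>p \<noteq> q\<close> unfolding others_def Lp_def by blast
qed

locale proj_plane =
  fixes inc :: "'p \<Rightarrow> 'l \<Rightarrow> bool"
  assumes projective_plane: "projective_plane inc"
begin

lemma line_unique: "\<lbrakk>p \<noteq> q; inc p l; inc q l; inc p m; inc q m\<rbrakk> \<Longrightarrow> l = m"
  using projective_plane unfolding projective_plane_def by blast

lemma join_inc:
  assumes "p \<noteq> q" shows "inc p (join inc p q)" "inc q (join inc p q)"
proof -
  have "\<exists>!l. inc p l \<and> inc q l"
    using projective_plane assms unfolding projective_plane_def by blast
  from theI'[OF this] show "inc p (join inc p q)" "inc q (join inc p q)"
    unfolding join_def by blast+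
qed

lemma meet_inc:
  assumes "l \<noteq> m" shows "inc (meet inc l m) l" "inc (meet inc l m) m"
proof -
  have "\<exists>!p. inc p l \<and> inc p m"
    using projective_plane assms unfolding projective_plane_def by blast
  from theI'[OF this] show "inc (meet inc l m) l" "inc (meet inc l m) m"
    unfolding meet_def by blast+
qed

lemma join_eq: "\<lbrakk>p \<noteq> q; inc p l; inc q l\<rbrakk> \<Longrightarrow> join inc p q = l"
  using join_inc line_unique by metis

lemma meet_eq: "\<lbrakk>l \<noteq> m; inc p l; inc p m\<rbrakk> \<Longrightarrow> meet inc l m = p"
  using meet_inc line_unique by metis

lemma join_comm: "join inc p q = join inc q p"
  unfolding join_def by (simp add: conj_commute)

lemma not_inc_crossing_line:
  "\<lbrakk>x \<noteq> y; inc x m; inc y m; inc y l; inc z l; \<not> inc z m\<rbrakk> \<Longrightarrow> \<not> inc x l"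
  using line_unique by blast

lemma unique_label_on_join:
  assumes lam: "bij_betw lam R ({p. inc p l} - {Y})" and "inc Y l" "\<not> inc M l"
    and P: "\<not> inc P (join inc M Y)"
  shows "\<exists>!k. k \<in> R \<and> inc P (join inc M (lam k))"
proof -
  have "M \<noteq> Y" using assms by auto
  then have "M \<noteq> P" using P join_inc by auto
  define N where "N = join inc M P"
  have N: "inc M N" "inc P N" unfolding N_def using join_inc[OF \<open>M \<noteq> P\<close>] by auto
  then have "N \<noteq> l" using \<open>\<not> inc M l\<close> by auto
  define Q where "Q = meet inc N l"
  have Q: "inc Q N" "inc Q l" unfolding Q_def using meet_inc[OF \<open>N \<noteq> l\<close>] by auto
  have "Q \<noteq> Y"
  proof
    assume "Q = Y"
    then have "join inc M Y = N" using join_eq[OF \<open>M \<noteq> Y\<close>] N Q by simp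
    then show False using P N by simp
  qed
  then have "Q \<in> lam ` R" using lam Q unfolding bij_betw_def by simp
  then obtain k0 where k0: "k0 \<in> R" "lam k0 = Q" by blast
  have on_join_iff: "inc P (join inc M (lam k)) \<longleftrightarrow> lam k = Q" if "k \<in> R" for k
  proof -
    have lk: "inc (lam k) l" "lam k \<noteq> Y" using lam that by (auto dest: bij_betw_apply)
    then have "M \<noteq> lam k" using \<open>\<not> inc M l\<close> by auto
    have "inc P (join inc M (lam k)) \<longleftrightarrow> join inc M (lam k) = N"
      using join_inc[OF \<open>M \<noteq> lam k\<close>] join_eq[OF \<open>M \<noteq> P\<close>] N unfolding N_def by metis
    also have "\<dots> \<longleftrightarrow> lam k = Q"
      using join_inc[OF \<open>M \<noteq> lam k\<close>] join_eq[OF \<open>M \<noteq> lam k\<close>] meet_eq[OF \<open>N \<noteq> l\<close>] lk N Q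
      unfolding Q_def by metis
    finally show ?thesis .
  qed
  show ?thesis
  proof
    show "k0 \<in> R \<and> inc P (join inc M (lam k0))" using on_join_iff[OF k0(1)] k0 by blast
    show "k = k0" if "k \<in> R \<and> inc P (join inc M (lam k))" for k
      using that k0 on_join_iff lam unfolding bij_betw_def inj_on_def by metis
  qed
qed

lemma collinearI: "\<lbrakk>inc p l; inc q l; inc r l\<rbrakk> \<Longrightarrow> collinear inc p q r"
  unfolding collinear_def by blast

lemma collinear_join_iff:
  assumes "p \<noteq> q" shows "collinear inc p q r \<longleftrightarrow> inc r (join inc p q)"
proof
  assume "collinear inc p q r"
  then obtain l where "inc p l" "inc q l" "inc r l" unfolding collinear_def by blast
  then show "inc r (join inc p q)" using join_eq[OF assms] by simp
next
  assume "inc r (join inc p q)"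
  with join_inc[OF assms] show "collinear inc p q r" by (rule collinearI)
qed

end

definition fano_quadrangle :: "('p \<Rightarrow> 'l \<Rightarrow> bool) \<Rightarrow> 'p \<Rightarrow> 'p \<Rightarrow> 'p \<Rightarrow> 'p \<Rightarrow> 'p \<Rightarrow> 'p \<Rightarrow> 'p \<Rightarrow> bool"
  where "fano_quadrangle inc a b c d e f g \<longleftrightarrow> quadrangle inc a b c d \<and>
    collinear inc a b e \<and> collinear inc c d e \<and> collinear inc a c f \<and> collinear inc b d f \<and>
    collinear inc a d g \<and> collinear inc b c g \<and> collinear inc e f g"

locale fano_config = proj_plane inc for inc :: "'p \<Rightarrow> 'l \<Rightarrow> bool" +
  fixes S :: "'p set" and T :: "'l set"
  assumes card_S: "card S = 7" and card_T: "card T = 7"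
    and line_points: "\<And>l. l \<in> T \<Longrightarrow> card {p \<in> S. inc p l} = 3"
    and point_lines: "\<And>p. p \<in> S \<Longrightarrow> card {l \<in> T. inc p l} = 3"
begin

lemma finite_S: "finite S"
  using card_S by (intro card_ge_0_finite) simp

lemma finite_T: "finite T"
  using card_T by (intro card_ge_0_finite) simp

lemma join_mem:
  assumes "p \<in> S" "q \<in> S" "p \<noteq> q" shows "join inc p q \<in> T"
proof -
  have "\<exists>l\<in>T. inc p l \<and> inc q l"
    by (rule fano_configuration_pair_on_line[where inc = inc];
        use line_unique card_S finite_T line_points point_lines assms in blast)
  then obtain l where "l \<in> T" "inc p l" "inc q l" by blast
  then show ?thesis using join_eq \<open>p \<noteq> q\<close> by simp
qed

lemma meet_mem:
  assumes "l \<in> T" "m \<in> T" "l \<noteq> m" shows "meet inc l m \<in> S"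
proof -
  have "\<exists>p\<in>S. inc p l \<and> inc p m"
    by (rule fano_configuration_pair_on_line[where inc = "\<lambda>l p. inc p l"];
        use line_unique card_T finite_S line_points point_lines assms in blast)
  then obtain p where "p \<in> S" "inc p l" "inc p m" by blast
  then show ?thesis using meet_eq \<open>l \<noteq> m\<close> by simp
qed

lemma not_collinear_off_line:
  assumes "l \<in> T" "p \<in> S" "q \<in> S" "r \<in> S" "\<not> inc p l" "\<not> inc q l" "\<not> inc r l"
    and "distinct [p, q, r]"
  shows "\<not> collinear inc p q r"
proof
  assume "collinear inc p q r"
  then obtain m where m: "inc p m" "inc q m" "inc r m" unfolding collinear_def by blast
  have "p \<noteq> q" using \<open>distinct [p, q, r]\<close> by simp
  then have "m \<in> T" using join_eq join_mem m assms by metis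
  have "m \<noteq> l" using m assms by blast
  define x where "x = meet inc m l"
  have "x \<in> S" "inc x m" "inc x l"
    unfolding x_def using meet_mem meet_inc \<open>m \<in> T\<close> \<open>m \<noteq> l\<close> assms by auto
  then have "{x, p, q, r} \<subseteq> {s \<in> S. inc s m}" using m assms by auto
  then have "card {x, p, q, r} \<le> card {s \<in> S. inc s m}"
    using finite_S by (intro card_mono) auto
  also have "\<dots> = 3" using line_points \<open>m \<in> T\<close> by simp
  finally have "card {x, p, q, r} \<le> 3" .
  moreover have "x \<notin> {p, q, r}" using \<open>inc x l\<close> assms by auto
  ultimately show False using assms by simp
qed

lemma diagonal_point_on_line:
  assumes "l \<in> T" "p \<in> S" "q \<in> S" "r \<in> S" "s \<in> S"
    and "\<not> inc p l" "\<not> inc q l" "\<not> inc r l" "\<not> inc s l" "distinct [p, q, r, s]"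
  obtains x where "collinear inc p q x" "collinear inc r s x" "inc x l"
proof -
  let ?pq = "join inc p q" and ?rs = "join inc r s"
  have pq: "inc p ?pq" "inc q ?pq" and rs: "inc r ?rs" "inc s ?rs"
    using join_inc assms by auto
  have "?pq \<noteq> ?rs"
    using not_collinear_off_line[of l p q r] assms pq rs unfolding collinear_def by auto
  define x where "x = meet inc ?pq ?rs"
  have x: "x \<in> S" "inc x ?pq" "inc x ?rs"
    unfolding x_def using meet_mem meet_inc join_mem \<open>?pq \<noteq> ?rs\<close> assms by auto
  have "collinear inc p q x" "collinear inc r s x"
    using x pq rs unfolding collinear_def by blast+
  moreover have "inc x l"
  proof (rule ccontr)
    assume "\<not> inc x l"
    then have "x \<in> {p, q}" "x \<in> {r, s}"
      using not_collinear_off_line[of l p q x] not_collinear_off_line[of l r s x]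
        \<open>collinear inc p q x\<close> \<open>collinear inc r s x\<close> x assms by auto
    then show False using assms by auto
  qed
  ultimately show thesis using that by blast
qed

lemma fano_quadrangle_exists: "\<exists>a b c d e f g. fano_quadrangle inc a b c d e f g"
proof -
  obtain l where "l \<in> T" using card_T by fastforce
  let ?Q = "S - {p \<in> S. inc p l}"
  have "card ?Q = 4"
    using finite_S card_S line_points[OF \<open>l \<in> T\<close>] by (subst card_Diff_subset) auto
  then obtain a where "a \<in> ?Q" by (metis card.empty ex_in_conv zero_neq_numeral)
  moreover have "card (?Q - {a}) = 3" using \<open>card ?Q = 4\<close> \<open>a \<in> ?Q\<close> by simp
  ultimately obtain b c d where "a \<in> ?Q" "b \<in> ?Q" "c \<in> ?Q" "d \<in> ?Q"
    and distinct: "distinct [a, b, c, d]"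
    unfolding card_3_iff by auto
  then have S: "a \<in> S" "b \<in> S" "c \<in> S" "d \<in> S"
    and off: "\<not> inc a l" "\<not> inc b l" "\<not> inc c l" "\<not> inc d l" by auto
  note off_line_facts = \<open>l \<in> T\<close> S off distinct
  have "quadrangle inc a b c d"
    unfolding quadrangle_def using off_line_facts
    by (simp add: not_collinear_off_line[OF \<open>l \<in> T\<close>])
  moreover obtain e where "collinear inc a b e" "collinear inc c d e" "inc e l"
    by (rule diagonal_point_on_line[of l a b c d]) (use off_line_facts in auto)
  moreover obtain f where "collinear inc a c f" "collinear inc b d f" "inc f l"
    by (rule diagonal_point_on_line[of l a c b d]) (use off_line_facts in auto)
  moreover obtain g where "collinear inc a d g" "collinear inc b c g" "inc g l"
    by (rule diagonal_point_on_line[of l a d b c]) (use off_line_facts in auto)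
  moreover from \<open>inc e l\<close> \<open>inc f l\<close> \<open>inc g l\<close> have "collinear inc e f g"
    unfolding collinear_def by blast
  ultimately have "fano_quadrangle inc a b c d e f g"
    unfolding fano_quadrangle_def by blast
  then show ?thesis by blast
qed

end

locale fano_frame = proj_plane inc for inc :: "'p \<Rightarrow> 'l \<Rightarrow> bool" +
  fixes a b c d e f g :: 'p and ab cd ac bd ad bc ef :: 'l
  assumes quadrangle: "quadrangle inc a b c d"
    and on_ab: "inc a ab" "inc b ab" "inc e ab"
    and on_cd: "inc c cd" "inc d cd" "inc e cd"
    and on_ac: "inc a ac" "inc c ac" "inc f ac"
    and on_bd: "inc b bd" "inc d bd" "inc f bd"
    and on_ad: "inc a ad" "inc d ad" "inc g ad"
    and on_bc: "inc b bc" "inc c bc" "inc g bc"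
    and on_ef: "inc e ef" "inc f ef" "inc g ef"
begin

lemmas on_lines [simp] = on_ab on_cd on_ac on_bd on_ad on_bc on_ef

lemma vertices_distinct [simp]: "a \<noteq> b" "a \<noteq> c" "a \<noteq> d" "b \<noteq> c" "b \<noteq> d" "c \<noteq> d"
  using quadrangle unfolding quadrangle_def by auto

lemma sides_avoid_vertices [simp]:
  "\<not> inc c ab" "\<not> inc d ab" "\<not> inc a cd" "\<not> inc b cd"
  "\<not> inc b ac" "\<not> inc d ac" "\<not> inc a bd" "\<not> inc c bd"
  "\<not> inc b ad" "\<not> inc c ad" "\<not> inc a bc" "\<not> inc d bc"
  using quadrangle on_lines unfolding quadrangle_def collinear_def by blast+

lemma diagonal_points_not_vertices [simp]:
  "e \<noteq> a" "e \<noteq> b" "e \<noteq> c" "e \<noteq> d" "f \<noteq> a" "f \<noteq> b" "f \<noteq> c" "f \<noteq> d"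
  "g \<noteq> a" "g \<noteq> b" "g \<noteq> c" "g \<noteq> d"
  using sides_avoid_vertices on_lines by metis+

declare diagonal_points_not_vertices [THEN not_sym, simp]

lemma sides_avoid_diagonal_points [simp]:
  "\<not> inc f ab" "\<not> inc g ab" "\<not> inc f cd" "\<not> inc g cd"
  "\<not> inc e ac" "\<not> inc g ac" "\<not> inc e bd" "\<not> inc g bd"
  "\<not> inc e ad" "\<not> inc f ad" "\<not> inc e bc" "\<not> inc f bc"
  subgoal by (rule not_inc_crossing_line[of f a ac ab b]) auto
  subgoal by (rule not_inc_crossing_line[of g a ad ab b]) auto
  subgoal by (rule not_inc_crossing_line[of f d bd cd c]) auto
  subgoal by (rule not_inc_crossing_line[of g d ad cd c]) auto
  subgoal by (rule not_inc_crossing_line[of e a ab ac c]) auto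
  subgoal by (rule not_inc_crossing_line[of g a ad ac c]) auto
  subgoal by (rule not_inc_crossing_line[of e b ab bd d]) auto
  subgoal by (rule not_inc_crossing_line[of g b bc bd d]) auto
  subgoal by (rule not_inc_crossing_line[of e a ab ad d]) auto
  subgoal by (rule not_inc_crossing_line[of f a ac ad d]) auto
  subgoal by (rule not_inc_crossing_line[of e b ab bc c]) auto
  subgoal by (rule not_inc_crossing_line[of f b bd bc c]) auto
  done

lemma diagonal_points_distinct [simp]: "e \<noteq> f" "e \<noteq> g" "f \<noteq> g"
  using sides_avoid_diagonal_points on_lines by metis+

declare diagonal_points_distinct [THEN not_sym, simp]

lemma diagonal_line_avoids_vertices [simp]:
  "\<not> inc a ef" "\<not> inc b ef" "\<not> inc c ef" "\<not> inc d ef"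
  subgoal by (rule not_inc_crossing_line[of a e ab ef f]) auto
  subgoal by (rule not_inc_crossing_line[of b e ab ef f]) auto
  subgoal by (rule not_inc_crossing_line[of c e cd ef f]) auto
  subgoal by (rule not_inc_crossing_line[of d e cd ef f]) auto
  done

lemma lines_distinct [simp]:
  "ab \<noteq> cd" "ab \<noteq> ac" "ab \<noteq> bd" "ab \<noteq> ad" "ab \<noteq> bc" "ab \<noteq> ef"
  "cd \<noteq> ac" "cd \<noteq> bd" "cd \<noteq> ad" "cd \<noteq> bc" "cd \<noteq> ef"
  "ac \<noteq> bd" "ac \<noteq> ad" "ac \<noteq> bc" "ac \<noteq> ef"
  "bd \<noteq> ad" "bd \<noteq> bc" "bd \<noteq> ef" "ad \<noteq> bc" "ad \<noteq> ef" "bc \<noteq> ef"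
  using sides_avoid_vertices sides_avoid_diagonal_points diagonal_line_avoids_vertices on_lines
  by metis+

declare vertices_distinct [THEN not_sym, simp] lines_distinct [THEN not_sym, simp]

lemma has_fano: "has_fano inc"
proof -
  let ?S = "{a, b, c, d, e, f, g}" and ?T = "{ab, cd, ac, bd, ad, bc, ef}"
  have "card ?S = 7" "card ?T = 7"
    by simp_all
  moreover have "\<forall>l\<in>?T. card {p\<in>?S. inc p l} = 3" "\<forall>p\<in>?S. card {l\<in>?T. inc p l} = 3"
    unfolding Collect_conj_insert by simp_all
  ultimately show ?thesis unfolding has_fano_def by blast
qed

lemma coordinatisation_with_involution:
  assumes "projective_plane_of_order inc n"
  shows "\<exists>(R :: nat set) zero one Or X Y E lam.
    card R = n \<and> coordinatisation inc R zero one Or X Y E lam \<and>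
    (\<exists>t\<in>R. t \<noteq> zero \<and> coord_add inc R one Or X Y E lam t t = zero)"
proof -
  let ?P = "{p. inc p ac} - {c}"
  have "card {p. inc p ac} = n + 1"
    using assms unfolding projective_plane_of_order_def by blast
  then have "finite ?P" "card ?P = n" by (auto intro: card_ge_0_finite)
  moreover have "a \<in> ?P" "f \<in> ?P" by auto
  ultimately obtain lam where lam: "bij_betw lam {0..<n} ?P" "lam 0 = a" "lam 1 = f"
    using bij_betw_fixing_two_labels[of ?P n a f] by auto
  have "lam (Suc 0) = f" \<comment> \<open>the form in which the simplifier meets the label 1\<close>
    using lam(3) by simp
  have "2 \<le> n"
    using card_mono[OF \<open>finite ?P\<close>, of "{a, f}"] \<open>card ?P = n\<close> \<open>a \<in> ?P\<close> \<open>f \<in> ?P\<close> by simp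
  have joins: "join inc a c = ac" "join inc b d = bd" "join inc c d = cd" "join inc a b = ab"
    "join inc b c = bc" "join inc e f = ef" "join inc f e = ef" "join inc f g = ef"
    "join inc e c = cd" "join inc f b = bd" "join inc g a = ad" "join inc g c = bc"
    by (rule join_eq; simp)+
  have meets: "meet inc bd ac = f" "meet inc cd ab = e" "meet inc ef bc = g" "meet inc ef ab = e"
    "meet inc cd bd = d"
    by (rule meet_eq; simp)+
  define R where "R = {0..<n}"
  have coord: "coordinatisation inc R 0 1 a b c d lam"
    unfolding coordinatisation_def R_def using quadrangle \<open>2 \<le> n\<close> lam joins meets by auto
  \<comment> \<open>(1,0) = e, (0,1) = f, J = (1) = g, and (1,1) = d\<close>
  have "pt10 inc a b c d = e" "ptJ inc 1 a b c d lam = g" "ptM inc a b c d lam 1 = g"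
    "ptA0 inc 1 a b c d lam 1 = e" "ptAB inc 1 a b c d lam 1 1 = d"
    unfolding ptAB_def ptA0_def ptM_def ptJ_def pt10_def by (simp_all add: lam \<open>lam (Suc 0) = f\<close> joins meets)
  then have "coord_add inc R 1 a b c d lam 1 1 = (THE k. k \<in> R \<and> inc d (join inc g (lam k)))"
    unfolding coord_add_def PTR_def lineMK_def by simp
  also have "\<dots> = 0"
  proof (rule the1_equality)
    show "\<exists>!k. k \<in> R \<and> inc d (join inc g (lam k))"
      using lam(1) unfolding R_def by (rule unique_label_on_join) (simp_all add: joins)
    show "0 \<in> R \<and> inc d (join inc g (lam 0))" using \<open>2 \<le> n\<close> by (simp add: R_def lam joins)
  qed
  finally show ?thesis using coord \<open>2 \<le> n\<close> unfolding R_def by force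
qed

end

lemma (in proj_plane) fano_frame_if_fano_quadrangle:
  assumes "fano_quadrangle inc a b c d e f g"
  obtains ab cd ac bd ad bc ef where "fano_frame inc a b c d e f g ab cd ac bd ad bc ef"
proof -
  obtain ab cd ac bd ad bc ef where
    "inc a ab" "inc b ab" "inc e ab" "inc c cd" "inc d cd" "inc e cd"
    "inc a ac" "inc c ac" "inc f ac" "inc b bd" "inc d bd" "inc f bd"
    "inc a ad" "inc d ad" "inc g ad" "inc b bc" "inc c bc" "inc g bc"
    "inc e ef" "inc f ef" "inc g ef"
    using assms unfolding fano_quadrangle_def collinear_def by blast
  moreover have "quadrangle inc a b c d" using assms unfolding fano_quadrangle_def by blast
  ultimately show thesis
    using that proj_plane_axioms unfolding fano_frame_def fano_frame_axioms_def by blast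
qed

locale coordinatised_plane = proj_plane inc for inc :: "'p \<Rightarrow> 'l \<Rightarrow> bool" +
  fixes R :: "'r set" and zero one :: 'r and Or X Y E :: 'p and lam :: "'r \<Rightarrow> 'p"
  assumes coordinatisation: "coordinatisation inc R zero one Or X Y E lam"
begin

abbreviation "OX \<equiv> join inc Or X"
abbreviation "OY \<equiv> join inc Or Y"
abbreviation "XY \<equiv> join inc X Y"
abbreviation "XE \<equiv> join inc X E"
abbreviation "YE \<equiv> join inc Y E"
abbreviation "J \<equiv> ptJ inc one Or X Y E lam"
abbreviation "A0 a \<equiv> ptA0 inc one Or X Y E lam a"
abbreviation "AB a b \<equiv> ptAB inc one Or X Y E lam a b"

lemma frame_quadrangle: "quadrangle inc Or X Y E"
  using coordinatisation unfolding coordinatisation_def by blast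

lemma frame_distinct [simp]: "Or \<noteq> X" "Or \<noteq> Y" "Or \<noteq> E" "X \<noteq> Y" "X \<noteq> E" "Y \<noteq> E"
  using frame_quadrangle unfolding quadrangle_def by auto

declare frame_distinct [THEN not_sym, simp]

lemma frame_lines [simp]:
  "inc Or OX" "inc X OX" "inc Or OY" "inc Y OY" "inc X XY" "inc Y XY"
  "inc X XE" "inc E XE" "inc Y YE" "inc E YE"
  using join_inc frame_distinct by auto

lemma frame_lines_avoid [simp]:
  "\<not> inc Y OX" "\<not> inc X OY" "\<not> inc Or XY" "\<not> inc Or XE" "\<not> inc Y XE"
  "\<not> inc Or YE" "\<not> inc X YE" "\<not> inc E OY" "\<not> inc E OX" "\<not> inc E XY"
  using frame_quadrangle frame_lines unfolding quadrangle_def collinear_def by blast+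

lemma frame_lines_distinct [simp]:
  "XE \<noteq> OY" "YE \<noteq> OX" "OX \<noteq> OY" "OX \<noteq> XY" "OY \<noteq> XY" "YE \<noteq> XE"
  using frame_lines frame_lines_avoid by metis+

lemma label_bij: "bij_betw lam R ({p. inc p OY} - {Y})"
  using coordinatisation unfolding coordinatisation_def by blast

lemma label_zero [simp]: "lam zero = Or" and label_one: "lam one = meet inc XE OY"
  using coordinatisation unfolding coordinatisation_def by auto

lemma label_on_OY:
  assumes "k \<in> R" shows "inc (lam k) OY" "lam k \<noteq> Y"
  using bij_betw_apply[OF label_bij assms] by auto

lemma label_inj: "\<lbrakk>k \<in> R; k' \<in> R; lam k = lam k'\<rbrakk> \<Longrightarrow> k = k'"
  using label_bij unfolding bij_betw_def inj_on_def by blast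

lemma unit_point_on_XY: "inc J XY" "J \<noteq> X" "J \<noteq> Y"
proof -
  define P01 P10 where "P01 = lam one" and "P10 = pt10 inc Or X Y E"
  have P01: "inc P01 XE" "inc P01 OY" unfolding P01_def label_one using meet_inc by simp_all
  have P10: "inc P10 YE" "inc P10 OX" unfolding P10_def pt10_def using meet_inc by simp_all
  have "P01 \<noteq> Y" "P01 \<noteq> Or" "P01 \<noteq> E" "P10 \<noteq> X" "P10 \<noteq> Or" "P10 \<noteq> Y"
    using P01 P10 frame_lines_avoid by auto
  then have "P10 \<noteq> P01" using line_unique[of Or P10 OX OY] P01 P10 by auto
  define LJ where "LJ = join inc P10 P01"
  have LJ: "inc P10 LJ" "inc P01 LJ" unfolding LJ_def using join_inc \<open>P10 \<noteq> P01\<close> by auto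
  have "LJ \<noteq> XY" using line_unique[of P10 X OX XY] LJ P10 \<open>P10 \<noteq> X\<close> by auto
  then have J: "inc J LJ" "inc J XY"
    unfolding ptJ_def LJ_def[symmetric] P10_def[symmetric] P01_def[symmetric] using meet_inc by auto
  then show "inc J XY" by simp
  show "J \<noteq> Y"
  proof
    assume "J = Y"
    then have "LJ = YE" using line_unique[of Y P10 LJ YE] J LJ P10 \<open>P10 \<noteq> Y\<close> by auto
    then have "P01 = E" using line_unique[of P01 E YE XE] LJ P01 by auto
    then show False using \<open>P01 \<noteq> E\<close> by simp
  qed
  show "J \<noteq> X"
  proof
    assume "J = X"
    then have "LJ = OX" using line_unique[of X P10 LJ OX] J LJ P10 \<open>P10 \<noteq> X\<close> by auto
    then have "P01 = Or" using line_unique[of P01 Or OX OY] LJ P01 by auto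
    then show False using \<open>P01 \<noteq> Or\<close> by simp
  qed
qed

lemma unit_point_off_axes [simp]: "\<not> inc J OY" "\<not> inc J OX"
  using unit_point_on_XY line_unique[of J Y OY XY] line_unique[of J X OX XY] by auto

lemma ptM_one: "ptM inc Or X Y E lam one = J"
  unfolding ptM_def ptJ_def by (simp add: join_comm)

lemma zero_mem: "zero \<in> R"
  using coordinatisation unfolding coordinatisation_def by blast

lemma label_nonzero:
  assumes "a \<in> R" "a \<noteq> zero" shows "lam a \<noteq> Or"
  using label_inj[OF assms(1) zero_mem] assms(2) by auto

lemma abscissa_point:
  assumes "a \<in> R" "a \<noteq> zero"
  shows "inc (A0 a) OX" "inc (A0 a) (join inc (lam a) J)" "A0 a \<noteq> Or" "A0 a \<noteq> X"
proof -
  let ?B = "lam a"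
  have B: "inc ?B OY" "?B \<noteq> Y" "?B \<noteq> Or" using label_on_OY label_nonzero assms by auto
  then have "?B \<noteq> J" by auto
  define L where "L = join inc ?B J"
  have L: "inc ?B L" "inc J L" unfolding L_def using join_inc \<open>?B \<noteq> J\<close> by auto
  then have "L \<noteq> OX" by auto
  then have A: "inc (A0 a) L" "inc (A0 a) OX"
    unfolding ptA0_def L_def[symmetric] using meet_inc by auto
  then show "inc (A0 a) OX" "inc (A0 a) (join inc (lam a) J)" unfolding L_def by auto
  show "A0 a \<noteq> Or"
  proof
    assume "A0 a = Or"
    then have "L = OY" using line_unique[of Or ?B L OY] A L B by auto
    then show False using L by simp
  qed
  show "A0 a \<noteq> X"
  proof
    assume "A0 a = X"
    then have "L = XY" using line_unique[of X J L XY] A L unit_point_on_XY by auto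
    then have "?B = Y" using line_unique[of ?B Y OY XY] L B by auto
    then show False using B by simp
  qed
qed

lemma affine_point_off_frame_lines:
  assumes "a \<in> R" "a \<noteq> zero" "b \<in> R" "b \<noteq> zero"
  shows "inc (AB a b) (join inc (A0 a) Y)" "inc (AB a b) (join inc (lam b) X)"
    and "\<not> inc (AB a b) OX" "\<not> inc (AB a b) OY" "\<not> inc (AB a b) XY"
proof -
  let ?A = "A0 a" and ?B = "lam b" and ?P = "AB a b"
  have A: "inc ?A OX" "?A \<noteq> Or" "?A \<noteq> X" using abscissa_point assms by auto
  have B: "inc ?B OY" "?B \<noteq> Y" "?B \<noteq> Or" using label_on_OY label_nonzero assms by auto
  have "\<not> inc ?A XY" using line_unique[of ?A X OX XY] A by auto
  have "?A \<noteq> Y" using A(1) frame_lines_avoid(1) by metis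
  have "?B \<noteq> X" using B(1) frame_lines_avoid(2) by metis
  define LA LB where "LA = join inc ?A Y" and "LB = join inc ?B X"
  have LA: "inc ?A LA" "inc Y LA" and LB: "inc ?B LB" "inc X LB"
    unfolding LA_def LB_def using join_inc \<open>?A \<noteq> Y\<close> \<open>?B \<noteq> X\<close> by auto
  have "\<not> inc Y LB"
  proof
    assume "inc Y LB"
    then have "LB = OY" using line_unique[of ?B Y LB OY] LB B by auto
    then show False using LB by simp
  qed
  then have "LA \<noteq> LB" using LA by auto
  then have P: "inc ?P LA" "inc ?P LB"
    unfolding ptAB_def LA_def[symmetric] LB_def[symmetric] using meet_inc by auto
  then show "inc ?P (join inc ?A Y)" "inc ?P (join inc ?B X)" unfolding LA_def LB_def by auto
  show "\<not> inc ?P XY"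
  proof
    assume "inc ?P XY"
    then have "?P = Y" using line_unique[of ?P Y LA XY] P LA \<open>\<not> inc ?A XY\<close> by auto
    then show False using P \<open>\<not> inc Y LB\<close> by simp
  qed
  show "\<not> inc ?P OX"
  proof
    assume "inc ?P OX"
    then have "?P = ?A" using line_unique[of ?P ?A LA OX] P LA A frame_lines_avoid(1) by metis
    then have "LB = OX" using line_unique[of ?A X LB OX] P LB A by auto
    then have "?B = Or" using line_unique[of ?B Or OX OY] LB B by auto
    then show False using B by simp
  qed
  show "\<not> inc ?P OY"
  proof
    assume "inc ?P OY"
    then have "?P = ?B" using line_unique[of ?P ?B LB OY] P LB B frame_lines_avoid(2) by metis
    then have "LA = OY" using line_unique[of ?B Y LA OY] P LA B by auto
    then have "?A = Or" using line_unique[of ?A Or OX OY] LA A by auto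
    then show False using A by simp
  qed
qed

lemma fano_quadrangle_if_involution:
  assumes t: "t \<in> R" "t \<noteq> zero" and involution: "coord_add inc R one Or X Y E lam t t = zero"
  shows "fano_quadrangle inc Or X Y (AB t t) (A0 t) (lam t) J"
proof -
  let ?P = "AB t t"
  note P = affine_point_off_frame_lines[OF t t]
  have "join inc J Y = XY" using unit_point_on_XY by (intro join_eq) auto
  then have "\<exists>!k. k \<in> R \<and> inc ?P (join inc J (lam k))"
    using P by (intro unique_label_on_join[OF label_bij]) auto
  then have "inc ?P (join inc J (lam (coord_add inc R one Or X Y E lam t t)))"
    unfolding coord_add_def PTR_def lineMK_def ptM_one by (rule theI'[THEN conjunct2])
  \<comment> \<open>t \<oplus> t = 0 says that (t,t) lies on [1,0], the line through J = (1) and O\<close>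
  then have "inc ?P (join inc J Or)" using involution by simp
  have "J \<noteq> Or" using unit_point_off_axes(2) frame_lines(1) by metis
  have "lam t \<noteq> J" using unit_point_off_axes(1) label_on_OY(1)[OF t(1)] by metis
  have "A0 t \<noteq> Y" using abscissa_point(1)[OF t] frame_lines_avoid(1) by metis
  have "lam t \<noteq> X" using label_on_OY(1)[OF t(1)] frame_lines_avoid(2) by metis
  have "quadrangle inc Or X Y ?P"
  proof -
    have "\<not> collinear inc Or X ?P" "\<not> collinear inc Or Y ?P" "\<not> collinear inc X Y ?P"
      using P(3-5) by (simp_all add: collinear_join_iff)
    moreover have "Or \<noteq> ?P" "X \<noteq> ?P" "Y \<noteq> ?P"
      using P(3,5) frame_lines(1,5,6) by metis+
    ultimately show ?thesis using frame_quadrangle unfolding quadrangle_def by blast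
  qed
  moreover note
    collinearI[OF frame_lines(1,2) abscissa_point(1)[OF t]]
    collinearI[OF join_inc(2)[OF \<open>A0 t \<noteq> Y\<close>] P(1) join_inc(1)[OF \<open>A0 t \<noteq> Y\<close>]]
    collinearI[OF frame_lines(3,4) label_on_OY(1)[OF t(1)]]
    collinearI[OF join_inc(2)[OF \<open>lam t \<noteq> X\<close>] P(2) join_inc(1)[OF \<open>lam t \<noteq> X\<close>]]
    collinearI[OF join_inc(2)[OF \<open>J \<noteq> Or\<close>] \<open>inc ?P (join inc J Or)\<close> join_inc(1)[OF \<open>J \<noteq> Or\<close>]]
    collinearI[OF frame_lines(5,6) unit_point_on_XY(1)]
    collinearI[OF abscissa_point(2)[OF t] join_inc[OF \<open>lam t \<noteq> J\<close>]]
  ultimately show ?thesis unfolding fano_quadrangle_def by blast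
qed

end

context proj_plane
begin

lemma has_fano_iff_fano_quadrangle:
  "has_fano inc \<longleftrightarrow> (\<exists>a b c d e f g. fano_quadrangle inc a b c d e f g)"
proof
  assume "has_fano inc"
  then obtain S T where "card S = 7" "card T = 7"
    "\<forall>l\<in>T. card {p \<in> S. inc p l} = 3" "\<forall>p\<in>S. card {l \<in> T. inc p l} = 3"
    unfolding has_fano_def by blast
  then have "fano_config inc S T"
    by (intro fano_config.intro proj_plane_axioms fano_config_axioms.intro) auto
  then show "\<exists>a b c d e f g. fano_quadrangle inc a b c d e f g"
    by (rule fano_config.fano_quadrangle_exists)
next
  assume "\<exists>a b c d e f g. fano_quadrangle inc a b c d e f g"
  then obtain a b c d e f g where "fano_quadrangle inc a b c d e f g" by blast
  then obtain ab cd ac bd ad bc ef where "fano_frame inc a b c d e f g ab cd ac bd ad bc ef"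
    by (rule fano_frame_if_fano_quadrangle)
  then show "has_fano inc" by (rule fano_frame.has_fano)
qed

lemma fano_quadrangle_iff_coordinatisation_with_involution:
  assumes "projective_plane_of_order inc n"
  shows "(\<exists>a b c d e f g. fano_quadrangle inc a b c d e f g) \<longleftrightarrow>
    (\<exists>(R :: nat set) zero one Or X Y E lam.
      card R = n \<and> coordinatisation inc R zero one Or X Y E lam \<and>
      (\<exists>t\<in>R. t \<noteq> zero \<and> coord_add inc R one Or X Y E lam t t = zero))"
    (is "?quadrangle \<longleftrightarrow> ?involution")
proof
  assume ?quadrangle
  then obtain a b c d e f g where "fano_quadrangle inc a b c d e f g" by blast
  then obtain ab cd ac bd ad bc ef where "fano_frame inc a b c d e f g ab cd ac bd ad bc ef"
    by (rule fano_frame_if_fano_quadrangle)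
  then show ?involution using assms by (rule fano_frame.coordinatisation_with_involution)
next
  assume ?involution
  then obtain R :: "nat set" and zero one Or X Y E lam t
    where "coordinatisation inc R zero one Or X Y E lam"
      and involution: "t \<in> R" "t \<noteq> zero" "coord_add inc R one Or X Y E lam t t = zero"
    by blast
  then have "coordinatised_plane inc R zero one Or X Y E lam"
    by (intro coordinatised_plane.intro proj_plane_axioms coordinatised_plane_axioms.intro)
  then show ?quadrangle
    using involution by (blast dest: coordinatised_plane.fano_quadrangle_if_involution)
qed

end

theorem theorem2p2:
  fixes inc :: "'p \<Rightarrow> 'l \<Rightarrow> bool" and n :: nat
  assumes "projective_plane_of_order inc n"
  shows "has_fano inc \<longleftrightarrow>
    (\<exists>(R :: nat set) zero one Or X Y E lam.
        card R = n \<and> coordinatisation inc R zero one Or X Y E lam \<and>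
        (\<exists>t\<in>R. t \<noteq> zero \<and> coord_add inc R one Or X Y E lam t t = zero))"
proof -
  interpret proj_plane inc
    using assms unfolding projective_plane_of_order_def by unfold_locales blast
  show ?thesis
    unfolding has_fano_iff_fano_quadrangle
    by (rule fano_quadrangle_iff_coordinatisation_with_involution[OF assms])
qed

end
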